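(* For all $m,n\ge 3$, the state complexity of $(V_m(a,b,c,d))^R\,V_n(d,c,b,a)$ is $3\cdot 2^{m+n-2}$.
   Context: The state complexity of a regular language is the number of states of its minimal complete DFA. For $n\ge 3$, $\mathcal{V}_n(a,b,c,d)$ is the DFA over $\{a,b,c,d\}$ with states $\{0,\dots,n-1\}$, initial state $0$, final states $\{n-1\}$, where $a$ maps $i\mapsto i+1\pmod n$; $b$ swaps $n-2$ and $n-1$ fixing other states; $c$ maps $n-1$ to $n-2$ fixing other states; $d$ is the identity. $V_n(a,b,c,d)$ is its language. $V_n(d,c,b,a)$ is the language of the DFA obtained by renaming letters: same states, initial state $0$, final states $\{n-1\}$, where $d$ maps $i\mapsto i+1\pmod n$, $c$ swaps $n-2$ and $n-1$, $b$ maps $n-1$ to $n-2$ fixing others, and $a$ is the identity. $L^R$ is the reversal of $L$, and $KL$ is concatenation. *)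

theory Defs
  imports Main
begin

datatype letter = a | b | c | d

type_synonym word = "letter list"

definition dfa_lang :: "('s \<Rightarrow> letter \<Rightarrow> 's) \<Rightarrow> 's \<Rightarrow> 's set \<Rightarrow> word set" where
  "dfa_lang delta q0 F = {w. foldl delta q0 w \<in> F}"

definition complete_dfa :: "'s set \<Rightarrow> ('s \<Rightarrow> letter \<Rightarrow> 's) \<Rightarrow> 's \<Rightarrow> 's set \<Rightarrow> bool" where
  "complete_dfa Q delta q0 F \<longleftrightarrow> finite Q \<and> q0 \<in> Q \<and> F \<subseteq> Q \<and> (\<forall>q\<in>Q. \<forall>x. delta q x \<in> Q)"

definition state_complexity :: "word set \<Rightarrow> nat" where
  "state_complexity L = (LEAST k. \<exists>(Q::nat set) delta q0 F.
      complete_dfa Q delta q0 F \<and> card Q = k \<and> dfa_lang delta q0 F = L)"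

definition rev_lang :: "word set \<Rightarrow> word set" where
  "rev_lang L = rev ` L"

definition concat_lang :: "word set \<Rightarrow> word set \<Rightarrow> word set" where
  "concat_lang K L = {u @ v | u v. u \<in> K \<and> v \<in> L}"

definition V_trans :: "nat \<Rightarrow> letter \<Rightarrow> letter \<Rightarrow> letter \<Rightarrow> letter \<Rightarrow> nat \<Rightarrow> letter \<Rightarrow> nat" where
  "V_trans n p q r s i x =
     (if x = p then (i + 1) mod n
      else if x = q then (if i = n - 2 then n - 1 else if i = n - 1 then n - 2 else i)
      else if x = r then (if i = n - 1 then n - 2 else i)
      else i)"

definition V_lang :: "nat \<Rightarrow> letter \<Rightarrow> letter \<Rightarrow> letter \<Rightarrow> letter \<Rightarrow> word set" where
  "V_lang n p q r s = dfa_lang (V_trans n p q r s) 0 {n - 1}"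

end

theory Submission
  imports Defs
begin

(* The proof is a Myhill-Nerode computation in three layers.

   1. A "Nerode map" of a language L is a function f on words with f u = f v exactly when
      u and v have the same continuations into L.  If its range is finite, the minimal complete
      DFA of L has card (range f) states (state_complexity_nerode_map).
   2. For DFAs over nat, the language K^R L (K, L accepted by DFAs A and B) is tracked by a
      subset construction on pairs (P, Q): P is the set of A-states from which the reversed input
      leads into the initial set, Q the set of B-states reached by suffixes of the input whose
      prefix is in K^R (cat_state).  Words act on these pairs (cat_state_append) and a word is in
      K^R L iff the final B-state lies in the second component (concat_rev_lang_iff).
   3. For the two concrete automata the states reachable from the initial pair are exactly the
      "valid" pairs (P, Q) of subsets of {..<m} x {..<n} with 0 in P implying 0 in Q
      (reachable_eq_valid_states); distinct valid pairs are separated by explicit words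
      (valid_states_distinguishable), so the state map is a Nerode map; and there are
      2^(m-1) * 2^n + 2^(m-1) * 2^(n-1) = 3 * 2^(m+n-2) valid pairs (card_valid_states). *)

definition nerode_map :: "word set \<Rightarrow> (word \<Rightarrow> 's) \<Rightarrow> bool" where
  "nerode_map L f \<longleftrightarrow> (\<forall>w1 w2. f w1 = f w2 \<longleftrightarrow> (\<forall>z. w1 @ z \<in> L \<longleftrightarrow> w2 @ z \<in> L))"

lemma nerode_map_append:
  assumes "nerode_map L f" and "f w1 = f w2"
  shows "f (w1 @ u) = f (w2 @ u)"
proof -
  have "w1 @ z \<in> L \<longleftrightarrow> w2 @ z \<in> L" for z
    using assms unfolding nerode_map_def by blast
  then have "(w1 @ u) @ z \<in> L \<longleftrightarrow> (w2 @ u) @ z \<in> L" for z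
    by simp
  then show ?thesis
    using assms(1) unfolding nerode_map_def by blast
qed

lemma nerode_map_mem:
  assumes "nerode_map L f" and "f w1 = f w2"
  shows "w1 \<in> L \<longleftrightarrow> w2 \<in> L"
  using assms unfolding nerode_map_def by (metis append.right_neutral)

lemma dfa_of_nerode_map:
  assumes nerode: "nerode_map L f" and fin: "finite (range f)"
  shows "\<exists>(Q::nat set) delta q0 F. complete_dfa Q delta q0 F \<and> card Q = card (range f)
           \<and> dfa_lang delta q0 F = L"
proof -
  define k where "k = card (range f)"
  obtain h where h: "bij_betw h (range f) {0..<k}"
    using ex_bij_betw_finite_nat[OF fin] k_def by blast
  define code where "code w = h (f w)" for w
  have code_eq: "code w1 = code w2 \<longleftrightarrow> f w1 = f w2" for w1 w2
    using bij_betw_imp_inj_on[OF h] unfolding code_def by (auto dest: inj_onD)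
  have code_range: "code w \<in> {0..<k}" for w
    using bij_betw_apply[OF h] unfolding code_def by simp
  define delta where "delta q x = code (inv code q @ [x])" for q x
  have run: "foldl delta (code []) w = code w" for w
  proof (induction w rule: rev_induct)
    case (snoc x w)
    have "code (inv code (code w)) = code w"
      by (rule f_inv_into_f) simp
    then have "f (inv code (code w) @ [x]) = f (w @ [x])"
      by (intro nerode_map_append[OF nerode]) (simp add: code_eq)
    then show ?case
      using snoc.IH by (simp add: delta_def code_eq)
  qed simp
  have lang: "code w \<in> code ` L \<longleftrightarrow> w \<in> L" for w
  proof
    assume "code w \<in> code ` L"
    then obtain v where "v \<in> L" "f w = f v"
      by (auto simp: code_eq)
    then show "w \<in> L"
      using nerode_map_mem[OF nerode] by blast
  qed simp
  show ?thesis
  proof (intro exI conjI)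
    show "complete_dfa {0..<k} delta (code []) (code ` L)"
      unfolding complete_dfa_def delta_def using code_range by auto
    show "dfa_lang delta (code []) (code ` L) = L"
      unfolding dfa_lang_def run lang by simp
  qed (simp add: k_def)
qed

lemma dfa_run_closed:
  assumes "complete_dfa Q delta q0 F" and "q \<in> Q"
  shows "foldl delta q w \<in> Q"
  using assms by (induction w arbitrary: q) (auto simp: complete_dfa_def)

(* Lower bound: any complete DFA for L has at least as many states as there are Nerode
   classes, because the class of a word is determined by the state the DFA reaches on it. *)
lemma card_range_nerode_map_le:
  assumes nerode: "nerode_map L f" and dfa: "complete_dfa Q delta q0 F"
    and lang: "dfa_lang delta q0 F = L"
  shows "card (range f) \<le> card Q"
proof -
  define g where "g w = foldl delta q0 w" for w
  have fin: "finite Q" and g_Q: "range g \<subseteq> Q"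
    using dfa dfa_run_closed[OF dfa] unfolding complete_dfa_def g_def by auto
  have g_mem: "w @ z \<in> L \<longleftrightarrow> foldl delta (g w) z \<in> F" for w z
    unfolding lang[symmetric] dfa_lang_def g_def by simp
  have f_g: "f w1 = f w2" if "g w1 = g w2" for w1 w2
  proof -
    have "w1 @ z \<in> L \<longleftrightarrow> w2 @ z \<in> L" for z
      unfolding g_mem that ..
    then show ?thesis
      using nerode unfolding nerode_map_def by blast
  qed
  have "range f = (\<lambda>q. f (inv g q)) ` range g"
  proof -
    have "f (inv g (g w)) = f w" for w
      by (rule f_g) (simp add: f_inv_into_f)
    then show ?thesis
      by (auto simp: image_image)
  qed
  also have "card \<dots> \<le> card (range g)"
    using finite_subset[OF g_Q fin] by (rule card_image_le)
  also have "\<dots> \<le> card Q"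
    using g_Q fin by (rule card_mono[rotated])
  finally show ?thesis .
qed

theorem state_complexity_nerode_map:
  assumes "nerode_map L f" and "finite (range f)"
  shows "state_complexity L = card (range f)"
  unfolding state_complexity_def
proof (rule Least_equality)
  show "\<exists>(Q::nat set) delta q0 F. complete_dfa Q delta q0 F \<and> card Q = card (range f)
          \<and> dfa_lang delta q0 F = L"
    using dfa_of_nerode_map[OF assms] .
next
  fix k
  assume "\<exists>(Q::nat set) delta q0 F. complete_dfa Q delta q0 F \<and> card Q = k
            \<and> dfa_lang delta q0 F = L"
  then obtain Q :: "nat set" and delta q0 F
    where dfa: "complete_dfa Q delta q0 F" and "card Q = k" and "dfa_lang delta q0 F = L"
    by blast
  then show "card (range f) \<le> k"
    using card_range_nerode_map_le[OF assms(1) dfa] by simp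
qed

lemma singleton_decompositions:
  fixes h :: "'a list \<Rightarrow> 'b" and P :: "'a list \<Rightarrow> bool"
  shows "{h v | t v. [x] = t @ v \<and> P t} = (if P [] then {h [x]} else {}) \<union> (if P [x] then {h []} else {})"
proof -
  have split: "[x] = t @ v \<longleftrightarrow> (t = [] \<and> v = [x]) \<or> (t = [x] \<and> v = [])" for t v :: "'a list"
    by (cases t) auto
  show ?thesis
    unfolding split by (auto split: if_splits)
qed

lemma mem_rev_image: "t \<in> rev ` X \<longleftrightarrow> rev t \<in> X"
  by (metis image_iff rev_rev_ident)

lemma replicate_Suc_snoc: "replicate (Suc k) x = replicate k x @ [x]"
  by (simp add: replicate_append_same)

lemma mem_insert_image_Pow:
  assumes "x \<notin> S"
  shows "A \<in> insert x ` Pow S \<longleftrightarrow> x \<in> A \<and> A \<subseteq> insert x S"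
proof
  assume "x \<in> A \<and> A \<subseteq> insert x S"
  then have "A = insert x (A - {x})" and "A - {x} \<in> Pow S"
    by auto
  then show "A \<in> insert x ` Pow S"
    by (rule image_eqI)
qed auto

lemma card_insert_image_Pow:
  assumes "finite S" and "x \<notin> S"
  shows "card (insert x ` Pow S) = 2 ^ card S"
proof -
  have "inj_on (insert x) (Pow S)"
    using assms(2) by (intro inj_onI) (auto simp: insert_ident)
  then show ?thesis
    using assms(1) by (simp add: card_image card_Pow)
qed

lemma rotate_back:
  fixes j n x :: nat
  assumes "j < n" and "x < n"
  shows "((j + (n - x)) mod n + x) mod n = j"
proof -
  have "((j + (n - x)) mod n + x) mod n = (j + (n - x) + x) mod n"
    by (simp add: mod_add_left_eq)
  also have "j + (n - x) + x = j + n"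
    using \<open>x < n\<close> by simp
  finally show ?thesis
    using \<open>j < n\<close> by simp
qed

lemma succ_mod_eq: "i < m \<Longrightarrow> Suc i mod m = (if i = m - 1 then 0 else Suc i)"
  by auto

lemma succ_mod_image_zero:
  assumes "A \<subseteq> {..<m}"
  shows "0 \<in> (\<lambda>i. Suc i mod m) ` A \<longleftrightarrow> m - 1 \<in> A"
proof
  assume "0 \<in> (\<lambda>i. Suc i mod m) ` A"
  then obtain i where "i \<in> A" and "Suc i mod m = 0"
    by auto
  moreover have "Suc i = m"
  proof (rule ccontr)
    assume "Suc i \<noteq> m"
    then have "Suc i < m"
      using assms \<open>i \<in> A\<close> by auto
    then show False
      using \<open>Suc i mod m = 0\<close> by simp
  qed
  ultimately show "m - 1 \<in> A"
    by (metis diff_Suc_1)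
next
  assume "m - 1 \<in> A"
  moreover have "Suc (m - 1) mod m = 0"
    using assms \<open>m - 1 \<in> A\<close> by auto
  ultimately show "0 \<in> (\<lambda>i. Suc i mod m) ` A"
    by (metis image_eqI)
qed

lemma succ_mod_image_top:
  assumes "A \<subseteq> {..<m}" and "2 \<le> m"
  shows "m - 1 \<in> (\<lambda>i. Suc i mod m) ` A \<longleftrightarrow> m - 2 \<in> A"
proof
  assume "m - 1 \<in> (\<lambda>i. Suc i mod m) ` A"
  then obtain i where "i \<in> A" and i: "Suc i mod m = m - 1"
    by auto
  have "Suc i \<noteq> m"
    using i \<open>2 \<le> m\<close> by auto
  then have "Suc i < m"
    using assms(1) \<open>i \<in> A\<close> by auto
  then have "Suc i = m - 1"
    using i by simp
  then have "i = m - 2"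
    by linarith
  then show "m - 2 \<in> A"
    using \<open>i \<in> A\<close> by simp
next
  assume "m - 2 \<in> A"
  moreover have "Suc (m - 2) mod m = m - 1"
    using \<open>2 \<le> m\<close> by (simp add: numeral_2_eq_2)
  ultimately show "m - 1 \<in> (\<lambda>i. Suc i mod m) ` A"
    by (metis image_eqI)
qed

(* Fix DFAs dA and dB over nat with initial state 0; the states of dA are those below m.
   pre_states A u are the dA-states from which the reversed word rev u leads into A (the subset
   construction for the reversed automaton); suffix_runs A u collects the dB-states reached on
   the suffixes v of u = t @ v whose prefix t is accepted, in reverse, by dA with final states A.
   cat_state pairs them, adding the runs of dB on u from an already active set B. *)
context
  fixes dA dB :: "nat \<Rightarrow> letter \<Rightarrow> nat" and m :: nat
begin

definition pre_states :: "nat set \<Rightarrow> word \<Rightarrow> nat set" where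
  "pre_states A u = {i. i < m \<and> foldl dA i (rev u) \<in> A}"

definition suffix_runs :: "nat set \<Rightarrow> word \<Rightarrow> nat set" where
  "suffix_runs A u = {foldl dB 0 v | t v. u = t @ v \<and> foldl dA 0 (rev t) \<in> A}"

definition cat_state :: "nat set \<times> nat set \<Rightarrow> word \<Rightarrow> nat set \<times> nat set" where
  "cat_state S u = (pre_states (fst S) u, (\<lambda>j. foldl dB j u) ` snd S \<union> suffix_runs (fst S) u)"

lemma run_closed:
  assumes "\<And>i x. i < m \<Longrightarrow> dA i x < m" and "i < m"
  shows "foldl dA i w < m"
  using assms by (induction w arbitrary: i) auto

lemma pre_states_append:
  assumes "\<And>i x. i < m \<Longrightarrow> dA i x < m"
  shows "pre_states (pre_states A u) v = pre_states A (u @ v)"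
  unfolding pre_states_def using run_closed[OF assms] by auto

(* A suffix of u @ v is either a suffix of u followed by v, or a suffix of v whose prefix
   passes through u; the second kind is detected by the pre_states of u. *)
lemma suffix_runs_append_subset:
  assumes closed: "\<And>i x. i < m \<Longrightarrow> dA i x < m" and "0 < m"
  shows "suffix_runs A (u @ v) \<subseteq> (\<lambda>j. foldl dB j v) ` suffix_runs A u \<union> suffix_runs (pre_states A u) v"
proof
  fix q assume "q \<in> suffix_runs A (u @ v)"
  then obtain t s where split: "u @ v = t @ s" and t: "foldl dA 0 (rev t) \<in> A"
    and q: "q = foldl dB 0 s"
    unfolding suffix_runs_def by blast
  from split obtain r where "(u = t @ r \<and> r @ v = s) \<or> (u @ r = t \<and> v = r @ s)"
    unfolding append_eq_append_conv2 by blast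
  then show "q \<in> (\<lambda>j. foldl dB j v) ` suffix_runs A u \<union> suffix_runs (pre_states A u) v"
  proof
    assume "u = t @ r \<and> r @ v = s"
    then have "foldl dB 0 r \<in> suffix_runs A u" and "q = foldl dB (foldl dB 0 r) v"
      using t q unfolding suffix_runs_def by auto
    then show ?thesis by blast
  next
    assume r: "u @ r = t \<and> v = r @ s"
    have "foldl dA 0 (rev r) < m"
      using run_closed[OF closed \<open>0 < m\<close>] .
    then have "foldl dA 0 (rev r) \<in> pre_states A u"
      using r t unfolding pre_states_def by auto
    then show ?thesis
      using r q unfolding suffix_runs_def by blast
  qed
qed

lemma suffix_runs_append_supset:
  "(\<lambda>j. foldl dB j v) ` suffix_runs A u \<union> suffix_runs (pre_states A u) v \<subseteq> suffix_runs A (u @ v)"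
proof
  fix q assume "q \<in> (\<lambda>j. foldl dB j v) ` suffix_runs A u \<union> suffix_runs (pre_states A u) v"
  then show "q \<in> suffix_runs A (u @ v)"
  proof
    assume "q \<in> (\<lambda>j. foldl dB j v) ` suffix_runs A u"
    then obtain t r where "u = t @ r" "foldl dA 0 (rev t) \<in> A" "q = foldl dB 0 (r @ v)"
      unfolding suffix_runs_def by auto
    then show ?thesis
      unfolding suffix_runs_def by (intro CollectI exI[of _ t] exI[of _ "r @ v"]) simp
  next
    assume "q \<in> suffix_runs (pre_states A u) v"
    then obtain r s where "v = r @ s" "foldl dA 0 (rev (u @ r)) \<in> A" "q = foldl dB 0 s"
      unfolding suffix_runs_def pre_states_def by auto
    then show ?thesis
      unfolding suffix_runs_def by (intro CollectI exI[of _ "u @ r"] exI[of _ s]) simp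
  qed
qed

lemma cat_state_append:
  assumes "\<And>i x. i < m \<Longrightarrow> dA i x < m" and "0 < m"
  shows "cat_state (cat_state S u) v = cat_state S (u @ v)"
  unfolding cat_state_def
  using subset_antisym[OF suffix_runs_append_subset[OF assms] suffix_runs_append_supset]
  by (simp add: pre_states_append[OF assms(1)] image_Un image_image Un_assoc)

lemma suffix_runs_Nil: "suffix_runs A [] = (if 0 \<in> A then {0} else {})"
  unfolding suffix_runs_def by auto

lemma suffix_runs_single:
  "suffix_runs A [x] = (if 0 \<in> A then {dB 0 x} else {}) \<union> (if dA 0 x \<in> A then {0} else {})"
  unfolding suffix_runs_def singleton_decompositions by simp

lemma cat_state_Nil: "cat_state (A, B) [] = ({i. i < m \<and> i \<in> A}, B \<union> (if 0 \<in> A then {0} else {}))"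
  by (simp add: cat_state_def pre_states_def suffix_runs_Nil)

lemma cat_state_single:
  "cat_state (A, B) [x] = ({i. i < m \<and> dA i x \<in> A},
     (\<lambda>j. dB j x) ` B \<union> (if 0 \<in> A then {dB 0 x} else {}) \<union> (if dA 0 x \<in> A then {0} else {}))"
  by (simp add: cat_state_def pre_states_def suffix_runs_single Un_assoc)

lemma concat_rev_lang_iff:
  "w \<in> concat_lang (rev_lang (dfa_lang dA 0 {f})) (dfa_lang dB 0 {g})
     \<longleftrightarrow> g \<in> snd (cat_state ({f}, {}) w)"
proof -
  have "w \<in> concat_lang (rev_lang (dfa_lang dA 0 {f})) (dfa_lang dB 0 {g})
     \<longleftrightarrow> (\<exists>t v. w = t @ v \<and> foldl dA 0 (rev t) = f \<and> foldl dB 0 v = g)"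
    unfolding concat_lang_def rev_lang_def dfa_lang_def mem_rev_image by simp
  also have "\<dots> \<longleftrightarrow> g \<in> suffix_runs {f} w"
    unfolding suffix_runs_def by blast
  finally show ?thesis
    by (simp add: cat_state_def)
qed

end

definition swap_top :: "nat \<Rightarrow> nat \<Rightarrow> nat" where
  "swap_top k i = (if i = k - 2 then k - 1 else if i = k - 1 then k - 2 else i)"

definition merge_top :: "nat \<Rightarrow> nat \<Rightarrow> nat" where
  "merge_top k i = (if i = k - 1 then k - 2 else i)"

lemma swap_top_swap_top: "swap_top k (swap_top k i) = i"
  by (auto simp: swap_top_def)

lemma swap_top_lt: "2 \<le> k \<Longrightarrow> i < k \<Longrightarrow> swap_top k i < k"
  by (auto simp: swap_top_def)

lemma swap_top_preimage:
  assumes "2 \<le> k" and "X \<subseteq> {..<k}"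
  shows "{i. i < k \<and> swap_top k i \<in> X} = swap_top k ` X"
  using assms swap_top_lt[OF assms(1)] by (auto simp: image_iff swap_top_swap_top) (metis swap_top_swap_top)

lemma swap_top_image_fix:
  assumes "k - 2 \<notin> S" and "k - 1 \<notin> S"
  shows "swap_top k ` S = S"
proof -
  have "swap_top k ` S = id ` S"
    using assms by (intro image_cong) (auto simp: swap_top_def)
  then show ?thesis
    by simp
qed

lemma merge_top_preimage:
  assumes "2 \<le> k" and "X \<subseteq> {..<k}"
  shows "{i. i < k \<and> merge_top k i \<in> X} = (if k - 2 \<in> X then insert (k - 1) X else X - {k - 1})"
  using assms by (auto simp: merge_top_def)

lemma merge_top_lt: "j < k \<Longrightarrow> merge_top k j < k"
  by (auto simp: merge_top_def)

lemma merge_top_ne_top: "2 \<le> k \<Longrightarrow> merge_top k j \<noteq> k - 1"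
  by (auto simp: merge_top_def)

context
  fixes m n :: nat
  assumes m3: "3 \<le> m" and n3: "3 \<le> n"
begin

abbreviation tA :: "nat \<Rightarrow> letter \<Rightarrow> nat" where "tA \<equiv> V_trans m a b c d"
abbreviation tB :: "nat \<Rightarrow> letter \<Rightarrow> nat" where "tB \<equiv> V_trans n d c b a"
abbreviation cstate :: "nat set \<times> nat set \<Rightarrow> word \<Rightarrow> nat set \<times> nat set" where
  "cstate \<equiv> cat_state tA tB m"

lemma tA_simps: "tA i a = Suc i mod m" "tA i b = swap_top m i" "tA i c = merge_top m i" "tA i d = i"
  by (simp_all add: V_trans_def swap_top_def merge_top_def)

lemma tB_simps: "tB j a = j" "tB j b = merge_top n j" "tB j c = swap_top n j" "tB j d = Suc j mod n"
  by (simp_all add: V_trans_def swap_top_def merge_top_def)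

lemma tops_at_zero:
  "swap_top m 0 = 0" "merge_top m 0 = 0" "swap_top n 0 = 0" "merge_top n 0 = 0"
  "Suc 0 mod m = 1" "Suc 0 mod n = 1"
  using m3 n3 by (simp_all add: swap_top_def merge_top_def)

lemma tA_lt: "i < m \<Longrightarrow> tA i x < m"
  using m3 by (cases x) (auto simp: V_trans_def)

lemma tB_lt: "j < n \<Longrightarrow> tB j x < n"
  using n3 by (cases x) (auto simp: V_trans_def)

lemma cstate_append: "cstate (cstate S u) v = cstate S (u @ v)"
  using cat_state_append[OF tA_lt] m3 by simp

lemma cstate_a:
  "cstate (A, B) [a] = ({i. i < m \<and> Suc i mod m \<in> A}, B \<union> (if 0 \<in> A \<or> 1 \<in> A then {0} else {}))"
  using m3 n3 by (auto simp: cat_state_single tA_simps tB_simps tops_at_zero)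

lemma cstate_b:
  "cstate (A, B) [b] = ({i. i < m \<and> swap_top m i \<in> A}, merge_top n ` B \<union> (if 0 \<in> A then {0} else {}))"
  using m3 n3 by (auto simp: cat_state_single tA_simps tB_simps tops_at_zero)

lemma cstate_c:
  "cstate (A, B) [c] = ({i. i < m \<and> merge_top m i \<in> A}, swap_top n ` B \<union> (if 0 \<in> A then {0} else {}))"
  using m3 n3 by (auto simp: cat_state_single tA_simps tB_simps tops_at_zero)

lemma cstate_d:
  "cstate (A, B) [d] = ({i. i < m \<and> i \<in> A}, (\<lambda>j. Suc j mod n) ` B \<union> (if 0 \<in> A then {0, 1} else {}))"
  using m3 n3 by (auto simp: cat_state_single tA_simps tB_simps tops_at_zero)

lemma cstate_a_power:
  assumes "A \<subseteq> {..<m}"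
  shows "cstate (A, B) (replicate k a) =
           ({i. i < m \<and> (i + k) mod m \<in> A}, B \<union> (if \<exists>t\<le>k. t mod m \<in> A then {0} else {}))"
proof (induction k)
  case 0
  then show ?case
    using assms by (auto simp: cat_state_Nil)
next
  case (Suc k)
  have shift: "(Suc i mod m + k) mod m = (i + Suc k) mod m" for i
    by (simp add: mod_add_left_eq)
  have hit_Suc: "(\<exists>t\<le>Suc k. t mod m \<in> A) \<longleftrightarrow> (\<exists>t\<le>k. t mod m \<in> A) \<or> Suc k mod m \<in> A"
    by (auto simp: le_Suc_eq)
  have "cstate (A, B) (replicate (Suc k) a) = cstate (cstate (A, B) (replicate k a)) [a]"
    by (simp only: cstate_append replicate_Suc_snoc)
  also have "\<dots> = ({i. i < m \<and> (i + Suc k) mod m \<in> A},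
                     B \<union> (if \<exists>t\<le>Suc k. t mod m \<in> A then {0} else {}))"
    unfolding Suc cstate_a hit_Suc using m3 by (auto simp: shift)
  finally show ?case .
qed

lemma cstate_d_power:
  assumes "A \<subseteq> {..<m}" and "B \<subseteq> {..<n}"
  shows "cstate (A, B) (replicate k d) =
           (A, (\<lambda>j. (j + k) mod n) ` B \<union> (if 0 \<in> A then (\<lambda>t. t mod n) ` {..k} else {}))"
proof (induction k)
  case 0
  have "(\<lambda>j. j mod n) ` B = id ` B"
    using assms(2) by (intro image_cong) auto
  then show ?case
    using assms(1) by (auto simp: cat_state_Nil)
next
  case (Suc k)
  have A: "{i. i < m \<and> i \<in> A} = A"
    using assms(1) by auto
  have rotB: "(\<lambda>j. Suc j mod n) ` (\<lambda>j. (j + k) mod n) ` B = (\<lambda>j. (j + Suc k) mod n) ` B"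
    by (auto simp: image_image mod_Suc_eq)
  have "1 \<in> (\<lambda>t. Suc t mod n) ` {..k}"
    using n3 by (intro image_eqI[of _ _ 0]) auto
  then have rot0: "(\<lambda>j. Suc j mod n) ` (\<lambda>t. t mod n) ` {..k} \<union> {0, 1} = (\<lambda>t. t mod n) ` {..Suc k}"
    by (auto simp: image_image mod_Suc_eq atMost_Suc_eq_insert_0)
  have "cstate (A, B) (replicate (Suc k) d) = cstate (cstate (A, B) (replicate k d)) [d]"
    by (simp only: cstate_append replicate_Suc_snoc)
  also have "\<dots> = (A, (\<lambda>j. (j + Suc k) mod n) ` B \<union> (if 0 \<in> A then (\<lambda>t. t mod n) ` {..Suc k} else {}))"
    unfolding Suc cstate_d A image_Un rotB by (auto simp flip: rot0)
  finally show ?case .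
qed

lemma accepts_after_d_power:
  assumes "A \<subseteq> {..<m}" and "B \<subseteq> {..<n}" and "k < n"
  shows "n - 1 \<in> snd (cstate (A, B) (replicate k d)) \<longleftrightarrow> n - 1 - k \<in> B \<or> (k = n - 1 \<and> 0 \<in> A)"
proof -
  have rot: "(j + k) mod n = n - 1 \<longleftrightarrow> j = n - 1 - k" if "j < n" for j
    using that \<open>k < n\<close> by (cases "j + k < n") (auto simp: le_mod_geq)
  have "n - 1 \<in> (\<lambda>j. (j + k) mod n) ` B \<longleftrightarrow> n - 1 - k \<in> B"
  proof
    assume "n - 1 \<in> (\<lambda>j. (j + k) mod n) ` B"
    then obtain j where "j \<in> B" and "(j + k) mod n = n - 1"
      by auto
    then show "n - 1 - k \<in> B"
      using rot assms(2) by auto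
  next
    assume "n - 1 - k \<in> B"
    moreover have "(n - 1 - k + k) mod n = n - 1"
      using \<open>k < n\<close> by simp
    ultimately show "n - 1 \<in> (\<lambda>j. (j + k) mod n) ` B"
      by (rule rev_image_eqI[OF _ sym])
  qed
  moreover have "n - 1 \<in> (\<lambda>t. t mod n) ` {..k} \<longleftrightarrow> k = n - 1"
    using \<open>k < n\<close> by (auto simp: image_iff intro: bexI[of _ "n - 1"])
  ultimately show ?thesis
    unfolding cstate_d_power[OF assms(1,2)] by auto
qed

(* The word a^i b d^n detects whether i is in A: b removes n - 1 from B and d^n then
   reports exactly whether 0 was in the rotated A. *)
lemma accepts_after_probe:
  assumes A: "A \<subseteq> {..<m}" and B: "B \<subseteq> {..<n}" and "i < m"
  shows "n - 1 \<in> snd (cstate (A, B) (replicate i a @ b # replicate n d)) \<longleftrightarrow> i \<in> A"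
proof -
  define A1 where "A1 = {j. j < m \<and> (j + i) mod m \<in> A}"
  define B1 where "B1 = B \<union> (if \<exists>t\<le>i. t mod m \<in> A then {0} else {})"
  define A' where "A' = {j. j < m \<and> swap_top m j \<in> A1}"
  define B' where "B' = merge_top n ` B1 \<union> (if 0 \<in> A1 then {0} else {})"
  have S: "cstate (A, B) (replicate i a @ [b]) = (A', B')"
    by (simp add: cstate_append[symmetric] cstate_a_power[OF A] cstate_b A1_def B1_def A'_def B'_def)
  have A': "A' \<subseteq> {..<m}" and zero: "0 \<in> A' \<longleftrightarrow> i \<in> A"
    using \<open>i < m\<close> m3 by (auto simp: A'_def A1_def tops_at_zero)
  have "B1 \<subseteq> {..<n}"
    using B n3 by (auto simp: B1_def)
  then have B': "B' \<subseteq> {..<n}"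
    using n3 merge_top_lt by (auto simp: B'_def)
  have "n - 1 \<notin> merge_top n ` B1"
  proof
    assume "n - 1 \<in> merge_top n ` B1"
    then obtain j where "merge_top n j = n - 1"
      by (metis imageE)
    then show False
      using merge_top_ne_top[of n j] n3 by linarith
  qed
  then have top: "n - 1 \<notin> B'"
    using n3 by (auto simp: B'_def)
  have "n - 1 \<notin> (\<lambda>j. (j + n) mod n) ` B'"
    using B' top by auto
  moreover have "n - 1 \<in> (\<lambda>t. t mod n) ` {..n}"
    using n3 by (intro image_eqI[of _ _ "n - 1"]) auto
  moreover have "cstate (A, B) (replicate i a @ b # replicate n d) = cstate (A', B') (replicate n d)"
    unfolding S[symmetric] by (simp add: cstate_append)
  ultimately show ?thesis
    using zero by (simp add: cstate_d_power[OF A' B'])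
qed

definition valid_states :: "(nat set \<times> nat set) set" where
  "valid_states = {(A, B). A \<subseteq> {..<m} \<and> B \<subseteq> {..<n} \<and> (0 \<in> A \<longrightarrow> 0 \<in> B)}"

(* Any two distinct valid pairs are separated by a word: a probe a^i b d^n if the first
   components differ, a power of d otherwise. *)
lemma valid_states_distinguishable:
  assumes S1: "(A1, B1) \<in> valid_states" and S2: "(A2, B2) \<in> valid_states"
    and ne: "(A1, B1) \<noteq> (A2, B2)"
  shows "\<exists>z. n - 1 \<in> snd (cstate (A1, B1) z) \<longleftrightarrow> n - 1 \<notin> snd (cstate (A2, B2) z)"
proof -
  have V1: "A1 \<subseteq> {..<m}" "B1 \<subseteq> {..<n}" "0 \<in> A1 \<longrightarrow> 0 \<in> B1"
    and V2: "A2 \<subseteq> {..<m}" "B2 \<subseteq> {..<n}" "0 \<in> A2 \<longrightarrow> 0 \<in> B2"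
    using S1 S2 by (auto simp: valid_states_def)
  show ?thesis
  proof (cases "A1 = A2")
    case False
    then obtain i where i: "i \<in> A1 \<longleftrightarrow> i \<notin> A2"
      by blast
    then have "i < m"
      using V1 V2 by blast
    have "n - 1 \<in> snd (cstate (A1, B1) (replicate i a @ b # replicate n d))
        \<longleftrightarrow> n - 1 \<notin> snd (cstate (A2, B2) (replicate i a @ b # replicate n d))"
      unfolding accepts_after_probe[OF V1(1,2) \<open>i < m\<close>]
        accepts_after_probe[OF V2(1,2) \<open>i < m\<close>]
      by (rule i)
    then show ?thesis ..
  next
    case True
    then obtain j where j: "j \<in> B1 \<longleftrightarrow> j \<notin> B2"
      using ne by blast
    then have "j < n"
      using V1 V2 by blast
    then have k_lt: "n - 1 - j < n" and k_back: "n - 1 - (n - 1 - j) = j"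
      by auto
    have "n - 1 - j = n - 1 \<longleftrightarrow> j = 0"
      using \<open>j < n\<close> by auto
    then have "n - 1 \<in> snd (cstate (A1, B1) (replicate (n - 1 - j) d))
        \<longleftrightarrow> n - 1 \<notin> snd (cstate (A2, B2) (replicate (n - 1 - j) d))"
      unfolding accepts_after_d_power[OF V1(1,2) k_lt] accepts_after_d_power[OF V2(1,2) k_lt] k_back
      using j True V1(3) V2(3) by auto
    then show ?thesis ..
  qed
qed

abbreviation reachable :: "(nat set \<times> nat set) set" where
  "reachable \<equiv> range (cstate ({m - 1}, {}))"

lemma reachable_step: "S \<in> reachable \<Longrightarrow> cstate S u = S' \<Longrightarrow> S' \<in> reachable"
  using cstate_append by auto

lemma reachable_initial: "({m - 1}, {}) \<in> reachable"
proof -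
  have "cstate ({m - 1}, {}) [] = ({m - 1}, {})"
    using m3 by (auto simp: cat_state_Nil)
  then show ?thesis
    by (metis rangeI)
qed

lemma cstate_a_shift:
  assumes A: "A \<subseteq> {..<m}" and "0 \<notin> A" and "1 \<notin> A"
  shows "cstate (A, B) [a] = ((\<lambda>i. i - 1) ` A, B)"
proof -
  have pred: "i \<in> (\<lambda>i. i - 1) ` A \<longleftrightarrow> Suc i \<in> A" for i
  proof
    assume "i \<in> (\<lambda>i. i - 1) ` A"
    then obtain t where "t \<in> A" and "i = t - 1"
      by blast
    moreover have "t \<noteq> 0"
      using \<open>t \<in> A\<close> \<open>0 \<notin> A\<close> by (cases "t = 0") simp_all
    ultimately show "Suc i \<in> A"
      by simp
  qed (rule image_eqI[of _ _ "Suc i"], simp)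
  have "{i. i < m \<and> Suc i mod m \<in> A} = {i. Suc i \<in> A}"
  proof (rule set_eqI)
    fix i
    show "i \<in> {i. i < m \<and> Suc i mod m \<in> A} \<longleftrightarrow> i \<in> {i. Suc i \<in> A}"
    proof (cases "Suc i < m")
      case True
      then show ?thesis by simp
    next
      case False
      then have "Suc i \<notin> A" and "i < m \<longrightarrow> Suc i = m"
        using A by auto
      then show ?thesis
        using \<open>0 \<notin> A\<close> by auto
    qed
  qed
  then show ?thesis
    using assms pred by (auto simp: cstate_a)
qed

lemma cstate_b_left:
  assumes "X \<subseteq> {..<m}" and "0 \<notin> X"
  shows "cstate (X, {}) [b] = (swap_top m ` X, {})"
  using assms m3 swap_top_preimage[OF _ assms(1)] by (simp add: cstate_b)

lemma cstate_c_left: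
  assumes "X \<subseteq> {..<m}" and "0 \<notin> X"
  shows "cstate (X, {}) [c] = (if m - 2 \<in> X then insert (m - 1) X else X - {m - 1}, {})"
  using assms m3 merge_top_preimage[OF _ assms(1)] by (simp add: cstate_c)

lemma reachable_raise_top:
  assumes "(insert (m - 2) S, {}) \<in> reachable" and S: "S \<subseteq> {1..m - 2}"
  shows "(insert (m - 1) S, {}) \<in> reachable"
proof -
  have S_bounds: "1 \<le> x \<and> x \<le> m - 2" if "x \<in> S" for x
    using that S by auto
  have X: "insert (m - 2) S \<subseteq> {..<m}" "0 \<notin> insert (m - 2) S" and "m - 1 \<notin> S"
    using m3 by (auto dest: S_bounds)
  show ?thesis
  proof (cases "m - 2 \<in> S")
    case True
    then have "cstate (insert (m - 2) S, {}) [c] = (insert (m - 1) S, {})"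
      using cstate_c_left[OF X] by (simp add: insert_absorb)
    then show ?thesis
      using assms(1) reachable_step by blast
  next
    case False
    have "swap_top m ` insert (m - 2) S = insert (m - 1) S"
      using False \<open>m - 1 \<notin> S\<close> m3 swap_top_image_fix[of m S] by (simp add: swap_top_def)
    then have "cstate (insert (m - 2) S, {}) [b] = (insert (m - 1) S, {})"
      using cstate_b_left[OF X] by simp
    then show ?thesis
      using assms(1) reachable_step by blast
  qed
qed

(* Every (insert (m-1) S, {}) with S inside {m-1-k..m-2} is reachable: shift by a and
   raise the top state again; induction on k. *)
lemma reachable_top_subsets:
  assumes "k \<le> m - 2" and "S \<subseteq> {m - 1 - k..m - 2}"
  shows "(insert (m - 1) S, {}) \<in> reachable"
  using assms
proof (induction k arbitrary: S)
  case 0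
  then have "S = {}"
    using m3 by auto
  then show ?case
    using reachable_initial by simp
next
  case (Suc k)
  have S_bounds: "m - 2 - k \<le> x \<and> x \<le> m - 2" if "x \<in> S" for x
    using that Suc.prems(2) by auto
  define S' where "S' = Suc ` (S - {m - 2})"
  have "S' \<subseteq> {m - 1 - k..m - 2}"
  proof
    fix y assume "y \<in> S'"
    then obtain x where "x \<in> S" "x \<noteq> m - 2" "y = Suc x"
      by (auto simp: S'_def)
    then show "y \<in> {m - 1 - k..m - 2}"
      using S_bounds by fastforce
  qed
  then have "(insert (m - 1) S', {}) \<in> reachable"
    using Suc.IH Suc.prems(1) by simp
  moreover have "cstate (insert (m - 1) S', {}) [a] = (insert (m - 2) S, {})"
  proof -
    have "(\<lambda>i. i - 1) ` insert (m - 1) S' = insert (m - 2) S"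
      using m3 by (auto simp: S'_def image_image numeral_2_eq_2)
    moreover have "insert (m - 1) S' \<subseteq> {..<m}" "0 \<notin> insert (m - 1) S'" "1 \<notin> insert (m - 1) S'"
      using Suc.prems(1) m3 by (auto simp: S'_def dest: S_bounds)
    ultimately show ?thesis
      using cstate_a_shift by simp
  qed
  ultimately have "(insert (m - 2) S, {}) \<in> reachable"
    by (rule reachable_step)
  moreover have "S \<subseteq> {1..m - 2}"
    using Suc.prems(1) by (auto dest: S_bounds)
  ultimately show ?case
    by (rule reachable_raise_top)
qed

lemma reachable_empty_right:
  assumes T: "T \<subseteq> {1..<m}"
  shows "(T, {}) \<in> reachable"
proof -
  have top: "(insert (m - 1) S, {}) \<in> reachable" if "S \<subseteq> {1..m - 2}" for S
    using reachable_top_subsets[of "m - 2" S] that m3 by simp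
  have below_top: "S \<subseteq> {1..m - 2}" if "S \<subseteq> T" and "m - 1 \<notin> S" for S
  proof
    fix x assume "x \<in> S"
    then have "1 \<le> x" "x < m" "x \<noteq> m - 1"
      using that T by auto
    then show "x \<in> {1..m - 2}"
      by simp
  qed
  have X: "insert (m - 1) S \<subseteq> {..<m}" "0 \<notin> insert (m - 1) S" if "S \<subseteq> T" for S
    using that T m3 by auto
  consider "m - 1 \<in> T" | "m - 1 \<notin> T" "m - 2 \<in> T" | "m - 1 \<notin> T" "m - 2 \<notin> T"
    by blast
  then show ?thesis
  proof cases
    case 1
    have "T - {m - 1} \<subseteq> {1..m - 2}"
      by (rule below_top) auto
    then show ?thesis
      using top[of "T - {m - 1}"] 1 by (simp add: insert_absorb)
  next
    case 2
    let ?S = "T - {m - 2}"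
    have "swap_top m ` insert (m - 1) ?S = T"
      using 2 m3 swap_top_image_fix[of m ?S] by (auto simp: swap_top_def)
    then have "cstate (insert (m - 1) ?S, {}) [b] = (T, {})"
      using cstate_b_left[OF X[of ?S]] by simp
    moreover have "?S \<subseteq> {1..m - 2}"
      using 2 by (intro below_top) auto
    ultimately show ?thesis
      using top reachable_step by blast
  next
    case 3
    then have "cstate (insert (m - 1) T, {}) [c] = (T, {})"
      using cstate_c_left[OF X[of T]] m3 by auto
    moreover have "T \<subseteq> {1..m - 2}"
      using 3 by (intro below_top) auto
    ultimately show ?thesis
      using top reachable_step by blast
  qed
qed

lemma reachable_rotate_right:
  assumes "(A, B) \<in> reachable" and "0 \<notin> A" and "A \<subseteq> {..<m}" and "B \<subseteq> {..<n}"
  shows "(A, (\<lambda>j. (j + k) mod n) ` B) \<in> reachable"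
  using reachable_step[OF assms(1), of "replicate k d"] cstate_d_power[OF assms(3,4), of k] assms(2)
  by simp

(* a^m fixes A and adds 0 to B whenever A is nonempty. *)
lemma reachable_add_zero:
  assumes "(A, B) \<in> reachable" and "A \<noteq> {}" and A: "A \<subseteq> {..<m}"
  shows "(A, insert 0 B) \<in> reachable"
proof -
  have "{i. i < m \<and> (i + m) mod m \<in> A} = A"
    using A by auto
  moreover obtain t where "t \<in> A"
    using \<open>A \<noteq> {}\<close> by blast
  then have "\<exists>t\<le>m. t mod m \<in> A"
    using A by (intro exI[of _ t]) auto
  ultimately show ?thesis
    using reachable_step[OF assms(1), of "replicate m a"] cstate_a_power[OF A, of B m] by simp
qed

(* With 0 outside a nonempty A, every B is reachable: insert its elements one by one by
   rotating them to 0, adding 0, and rotating back. *)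
lemma reachable_nonempty_left:
  assumes "0 \<notin> A" and "A \<noteq> {}" and A: "A \<subseteq> {..<m}" and B: "B \<subseteq> {..<n}"
  shows "(A, B) \<in> reachable"
proof -
  have "finite B"
    using B finite_subset by blast
  then show ?thesis
    using B
  proof (induction B rule: finite_induct)
    case empty
    have "A \<subseteq> {1..<m}"
      using A \<open>0 \<notin> A\<close> by (auto simp: Suc_le_eq intro: gr0I)
    then show ?case
      by (rule reachable_empty_right)
  next
    case (insert x F)
    then have F: "F \<subseteq> {..<n}" and "x < n"
      by auto
    define F' where "F' = (\<lambda>j. (j + (n - x)) mod n) ` F"
    have "F' \<subseteq> {..<n}"
      using n3 by (auto simp: F'_def)
    then have "insert 0 F' \<subseteq> {..<n}"
      using n3 by auto
    have "(A, F') \<in> reachable"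
      unfolding F'_def using insert.IH[OF F] \<open>0 \<notin> A\<close> A F by (rule reachable_rotate_right)
    then have "(A, insert 0 F') \<in> reachable"
      using \<open>A \<noteq> {}\<close> A by (rule reachable_add_zero)
    then have "(A, (\<lambda>j. (j + x) mod n) ` insert 0 F') \<in> reachable"
      using \<open>0 \<notin> A\<close> A \<open>insert 0 F' \<subseteq> {..<n}\<close> by (rule reachable_rotate_right)
    moreover have "(\<lambda>j. (j + x) mod n) ` insert 0 F' = insert x F"
    proof -
      have "(\<lambda>j. (j + x) mod n) ` F' = id ` F"
        unfolding F'_def image_image using F \<open>x < n\<close> rotate_back
        by (intro image_cong) auto
      then show ?thesis
        using \<open>x < n\<close> by simp
    qed
    ultimately show ?case
      by simp
  qed
qed

(* The case A = {} is reached from ({m - 1}, swap_top n ` B) by the letter c. *)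
lemma reachable_no_zero:
  assumes "0 \<notin> A" and A: "A \<subseteq> {..<m}" and B: "B \<subseteq> {..<n}"
  shows "(A, B) \<in> reachable"
proof (cases "A = {}")
  case False
  then show ?thesis
    using reachable_nonempty_left assms by blast
next
  case True
  have "swap_top n ` B \<subseteq> {..<n}"
    using B n3 swap_top_lt[of n] by auto
  then have "({m - 1}, swap_top n ` B) \<in> reachable"
    using m3 by (intro reachable_nonempty_left) auto
  moreover have "cstate ({m - 1}, swap_top n ` B) [c] = ({}, B)"
    using m3 by (auto simp: cstate_c merge_top_def image_image swap_top_swap_top)
  ultimately show ?thesis
    using True reachable_step by blast
qed

(* If 0 is in B, the letter a maps the rotated pair back onto (A, B). *)
lemma reachable_a_preimage:
  assumes "((\<lambda>i. Suc i mod m) ` A, B) \<in> reachable" and A: "A \<subseteq> {..<m}" and "0 \<in> B"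
  shows "(A, B) \<in> reachable"
proof -
  have "inj_on (\<lambda>i. Suc i mod m) {..<m}"
    by (rule inj_onI) (auto simp: succ_mod_eq split: if_splits)
  then have "{i. i < m \<and> Suc i mod m \<in> (\<lambda>i. Suc i mod m) ` A} = A"
    using A by (auto dest: inj_onD)
  then have "cstate ((\<lambda>i. Suc i mod m) ` A, B) [a] = (A, B)"
    using \<open>0 \<in> B\<close> by (auto simp: cstate_a)
  then show ?thesis
    using assms(1) reachable_step by blast
qed

(* Pairs with 0 in A.  If m - 1 is not in A, the rotated first component avoids 0, so the
   pair is the a-image of a pair handled above. *)
lemma reachable_zero_without_top:
  assumes "0 \<in> A" and "m - 1 \<notin> A" and A: "A \<subseteq> {..<m}" and B: "B \<subseteq> {..<n}" and "0 \<in> B"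
  shows "(A, B) \<in> reachable"
proof (rule reachable_a_preimage[OF _ A \<open>0 \<in> B\<close>])
  have "0 \<notin> (\<lambda>i. Suc i mod m) ` A"
    using succ_mod_image_zero[OF A] \<open>m - 1 \<notin> A\<close> by simp
  moreover have "(\<lambda>i. Suc i mod m) ` A \<subseteq> {..<m}"
    using m3 by auto
  ultimately show "((\<lambda>i. Suc i mod m) ` A, B) \<in> reachable"
    using B by (rule reachable_no_zero)
qed

(* If m - 1 is in A but m - 2 is not, the rotated first component contains 0 but not m - 1. *)
lemma reachable_zero_without_penultimate:
  assumes "0 \<in> A" and "m - 1 \<in> A" and "m - 2 \<notin> A" and A: "A \<subseteq> {..<m}"
    and B: "B \<subseteq> {..<n}" and "0 \<in> B"
  shows "(A, B) \<in> reachable"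
proof -
  let ?A' = "(\<lambda>i. Suc i mod m) ` A"
  have "0 \<in> ?A'" and "m - 1 \<notin> ?A'"
    using succ_mod_image_zero[OF A] succ_mod_image_top[OF A] assms(2,3) m3 by simp_all
  moreover have "?A' \<subseteq> {..<m}"
    using m3 by auto
  ultimately have "(?A', B) \<in> reachable"
    using B \<open>0 \<in> B\<close> by (rule reachable_zero_without_top)
  then show ?thesis
    using A \<open>0 \<in> B\<close> by (rule reachable_a_preimage)
qed

(* If m - 2 and m - 1 are both in A, start without m - 1 and with B swapped: c restores
   m - 1 (as a preimage of m - 2) and undoes the swap on B. *)
lemma reachable_zero_with_tops:
  assumes "0 \<in> A" and "m - 1 \<in> A" and "m - 2 \<in> A" and A: "A \<subseteq> {..<m}"
    and B: "B \<subseteq> {..<n}" and "0 \<in> B"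
  shows "(A, B) \<in> reachable"
proof -
  let ?A' = "A - {m - 1}"
  have "swap_top n ` B \<subseteq> {..<n}"
    using B n3 swap_top_lt[of n] by auto
  moreover have "0 \<in> swap_top n ` B"
    using \<open>0 \<in> B\<close> tops_at_zero(3) by (metis image_eqI)
  moreover have "0 \<in> ?A'" "m - 1 \<notin> ?A'" "?A' \<subseteq> {..<m}"
    using A assms(1) m3 by auto
  ultimately have "(?A', swap_top n ` B) \<in> reachable"
    by (intro reachable_zero_without_top)
  moreover have "cstate (?A', swap_top n ` B) [c] = (A, B)"
  proof -
    have "?A' \<subseteq> {..<m}" and "2 \<le> m" and "m - 2 \<in> ?A'"
      using A assms(3) m3 by auto
    then have "{i. i < m \<and> merge_top m i \<in> ?A'} = insert (m - 1) ?A'"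
      using merge_top_preimage by (simp only: if_P)
    also have "\<dots> = A"
      using assms(2) by auto
    finally show ?thesis
      using assms(1) \<open>0 \<in> B\<close> by (auto simp: cstate_c image_image swap_top_swap_top)
  qed
  ultimately show ?thesis
    using reachable_step by blast
qed

lemma reachable_valid:
  assumes "(A, B) \<in> valid_states"
  shows "(A, B) \<in> reachable"
proof -
  have A: "A \<subseteq> {..<m}" and B: "B \<subseteq> {..<n}" and zero: "0 \<in> A \<Longrightarrow> 0 \<in> B"
    using assms by (auto simp: valid_states_def)
  consider "0 \<notin> A" | "0 \<in> A" "m - 1 \<notin> A" | "0 \<in> A" "m - 1 \<in> A" "m - 2 \<notin> A"
    | "0 \<in> A" "m - 1 \<in> A" "m - 2 \<in> A"
    by blast
  then show ?thesis
  proof cases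
    case 1
    then show ?thesis
      using A B by (rule reachable_no_zero)
  next
    case 2
    then show ?thesis
      using A B zero reachable_zero_without_top by blast
  next
    case 3
    then show ?thesis
      using A B zero reachable_zero_without_penultimate by blast
  next
    case 4
    then show ?thesis
      using A B zero reachable_zero_with_tops by blast
  qed
qed

lemma cstate_valid: "cstate ({m - 1}, {}) w \<in> valid_states"
proof -
  have tB_run: "foldl tB 0 v < n" for v
    using run_closed[of n tB, OF tB_lt] n3 by simp
  have "0 \<in> suffix_runs tA tB {m - 1} w" if "foldl tA 0 (rev w) = m - 1"
    unfolding suffix_runs_def using that by (intro CollectI exI[of _ w] exI[of _ "[]"]) simp
  then show ?thesis
    unfolding valid_states_def cat_state_def pre_states_def using tB_run
    by (auto simp: suffix_runs_def)
qed

lemma lang_iff_cstate: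
  "w \<in> concat_lang (rev_lang (V_lang m a b c d)) (V_lang n d c b a)
     \<longleftrightarrow> n - 1 \<in> snd (cstate ({m - 1}, {}) w)"
  unfolding V_lang_def by (rule concat_rev_lang_iff)

(* Counting: pairs with 0 outside A, plus pairs with 0 in both A and B. *)
lemma card_valid_states: "card valid_states = 3 * 2 ^ (m + n - 2)"
proof -
  define P0 where "P0 = Pow ({..<m} - {0}) \<times> Pow {..<n}"
  define P1 where "P1 = insert 0 ` Pow ({..<m} - {0}) \<times> insert 0 ` Pow ({..<n} - {0})"
  have ins: "insert 0 ({..<k} - {0}) = {..<k}" if "0 < k" for k :: nat
    using that by auto
  have "valid_states = P0 \<union> P1"
    unfolding valid_states_def P0_def P1_def using m3 n3
    by (auto simp: mem_insert_image_Pow ins)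
  moreover have "P0 \<inter> P1 = {}"
    by (auto simp: P0_def P1_def)
  moreover have "finite P0" and "finite P1"
    by (simp_all add: P0_def P1_def)
  ultimately have "card valid_states = card P0 + card P1"
    by (simp add: card_Un_disjoint)
  also have "\<dots> = 2 ^ (m - 1) * 2 ^ n + 2 ^ (m - 1) * 2 ^ (n - 1)"
    using m3 n3 by (simp add: P0_def P1_def card_cartesian_product card_Pow card_insert_image_Pow)
  also have "\<dots> = 3 * 2 ^ (m + n - 2)"
  proof -
    have "m = Suc (m - 1)" and "n = Suc (Suc (n - 2))"
      using m3 n3 by auto
    then obtain p q where "m = Suc p" and "n = Suc (Suc q)"
      by blast
    then show ?thesis
      by (simp add: power_add)
  qed
  finally show ?thesis .
qed

lemma reachable_eq_valid_states: "reachable = valid_states"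
  using cstate_valid reachable_valid by fastforce

lemma nerode_map_cstate:
  "nerode_map (concat_lang (rev_lang (V_lang m a b c d)) (V_lang n d c b a)) (cstate ({m - 1}, {}))"
  unfolding nerode_map_def lang_iff_cstate
proof (intro allI, rule iffI)
  fix w1 w2 :: word
  let ?S1 = "cstate ({m - 1}, {}) w1" and ?S2 = "cstate ({m - 1}, {}) w2"
  have accepts: "n - 1 \<in> snd (cstate ({m - 1}, {}) (w @ z)) \<longleftrightarrow> n - 1 \<in> snd (cstate (cstate ({m - 1}, {}) w) z)"
    for w z
    by (simp add: cstate_append)
  show "\<forall>z. n - 1 \<in> snd (cstate ({m - 1}, {}) (w1 @ z)) \<longleftrightarrow> n - 1 \<in> snd (cstate ({m - 1}, {}) (w2 @ z))"
    if "?S1 = ?S2"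
    using that unfolding accepts by simp
  show "?S1 = ?S2"
    if "\<forall>z. n - 1 \<in> snd (cstate ({m - 1}, {}) (w1 @ z)) \<longleftrightarrow> n - 1 \<in> snd (cstate ({m - 1}, {}) (w2 @ z))"
  proof (rule ccontr)
    assume "?S1 \<noteq> ?S2"
    moreover have "?S1 \<in> valid_states" and "?S2 \<in> valid_states"
      by (rule cstate_valid)+
    ultimately obtain z where "n - 1 \<in> snd (cstate ?S1 z) \<longleftrightarrow> n - 1 \<notin> snd (cstate ?S2 z)"
      using valid_states_distinguishable by (metis prod.collapse)
    then show False
      using that unfolding accepts by simp
  qed
qed

lemma finite_valid_states: "finite valid_states"
proof (rule finite_subset)
  show "valid_states \<subseteq> Pow {..<m} \<times> Pow {..<n}"
    by (auto simp: valid_states_def)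
qed simp

theorem state_complexity_rev_concat:
  "state_complexity (concat_lang (rev_lang (V_lang m a b c d)) (V_lang n d c b a)) = 3 * 2 ^ (m + n - 2)"
  using state_complexity_nerode_map[OF nerode_map_cstate] reachable_eq_valid_states
    finite_valid_states card_valid_states by simp

end

theorem theorem5:
  fixes m n :: nat
  assumes "m \<ge> 3" and "n \<ge> 3"
  shows "state_complexity (concat_lang (rev_lang (V_lang m a b c d)) (V_lang n d c b a))
           = 3 * 2 ^ (m + n - 2)"
  using state_complexity_rev_concat[OF assms] .

end
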